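(* Let $G,H$ be non-discrete unimodular lcsc compactly generated groups and let $(\Omega,X_G,X_H,\mu)$ be a measure equivalence coupling between them satisfying properties (P1) and (P3) below. Then there is a constant $K'>0$ (independent of $f$ and $p$) such that for every $p\ge1$ and every $f\in\mathrm{L}^p(H)$ with support of finite measure, $$\int_{X_G}\|f_x\|_p^p\,d\nu_G(x)\ge K'\|f\|_p^p.$$
   Context: Measure equivalence coupling: measure space $(\Omega,\mu)$ with commuting measure-preserving $G$- and $H$-actions (written $\ast$), subsets $X_G,X_H$ with finite measures $\nu_G,\nu_H$ such that $(g,x)\mapsto g\ast x$ is a measure space isomorphism $(G\times X_G,\lambda_G\otimes\nu_G)\to(\Omega,\mu)$ and likewise for $H\times X_H$. Induced action: $g\cdot x$ is the unique point of $(H\ast g\ast x)\cap X_H$ ($g\in G,x\in X_H$), cocycle $\alpha(g,x)\ast g\ast x=g\cdot x$; symmetrically $H\curvearrowright X_G$ with cocycle $\beta$. $R^G_Y(x)=\{g: g\cdot x\in Y\}$, $R^H_Y(x)=\{h:h\cdot x\in Y\}$. (P1): there is $C>0$ with $\nu_G|_{X_G\cap X_H}=C\nu_H|_{X_G\cap X_H}$ and $\nu_G(X_G\cap X_H)>0$. (P3): for a.e. $x\in X_H$, $\alpha(\cdot,x)\colon(R^G_{X_G\cap X_H}(x),\lambda_G)\to(\alpha(R^G_{X_G\cap X_H}(x),x),\lambda_H)$ is measure preserving, and for a.e. $x\in X_G$, $\beta(\cdot,x)\colon(R^H_{X_G\cap X_H}(x),\lambda_H)\to(\beta(R^H_{X_G\cap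 X_H}(x),x),\lambda_G)$ is measure preserving. Given $f\colon H\to\mathbb{R}$, $\tilde f(h\ast x)=f(h^{-1})$ ($h\in H$, $x\in X_H$) and $f_x(g)=\tilde f(g\ast x)$ for $x\in X_G$, $g\in G$. *)

theory Defs
  imports "HOL-Analysis.Analysis"
begin

text \<open>Groups are written additively (class group_add is not necessarily commutative);
  the inverse of g is -g.\<close>

definition add_subgroup :: "'g::group_add set \<Rightarrow> bool" where
  "add_subgroup S \<longleftrightarrow> 0 \<in> S \<and> (\<forall>x\<in>S. \<forall>y\<in>S. x + y \<in> S) \<and> (\<forall>x\<in>S. - x \<in> S)"

definition generated_subgroup :: "'g::group_add set \<Rightarrow> 'g set" where
  "generated_subgroup K = \<Inter> {S. K \<subseteq> S \<and> add_subgroup S}"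

definition lcsc_cg_nondiscrete :: "'g::{topological_group_add, t2_space, second_countable_topology} itself \<Rightarrow> bool" where
  "lcsc_cg_nondiscrete _ \<longleftrightarrow>
     locally_compact_space (euclidean :: 'g topology)
   \<and> (\<exists>K::'g set. compact K \<and> generated_subgroup K = UNIV)
   \<and> \<not> (\<forall>x::'g. open {x})"

definition haar_measure :: "'g::topological_group_add measure \<Rightarrow> bool" where
  "haar_measure lam \<longleftrightarrow>
     sets lam = sets borel
   \<and> (\<forall>g. \<forall>A\<in>sets borel. emeasure lam ((\<lambda>x. g + x) ` A) = emeasure lam A)
   \<and> (\<forall>K. compact K \<longrightarrow> emeasure lam K < \<infinity>)
   \<and> (\<forall>U. open U \<and> U \<noteq> {} \<longrightarrow> emeasure lam U > 0)"

definition unimodular_haar :: "'g::topological_group_add measure \<Rightarrow> bool" where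
  "unimodular_haar lam \<longleftrightarrow> haar_measure lam
   \<and> (\<forall>g. \<forall>A\<in>sets borel. emeasure lam ((\<lambda>x. x + g) ` A) = emeasure lam A)"

definition mp_action :: "'g::group_add measure \<Rightarrow> 'w measure \<Rightarrow> ('g \<Rightarrow> 'w \<Rightarrow> 'w) \<Rightarrow> bool" where
  "mp_action lam mu act \<longleftrightarrow>
     (\<forall>g. \<forall>w\<in>space mu. act g w \<in> space mu)
   \<and> (\<forall>w\<in>space mu. act 0 w = w)
   \<and> (\<forall>g g'. \<forall>w\<in>space mu. act (g + g') w = act g (act g' w))
   \<and> (\<lambda>(g, w). act g w) \<in> measurable (lam \<Otimes>\<^sub>M mu) mu
   \<and> (\<forall>g. \<forall>A\<in>sets mu. emeasure mu (act g -` A \<inter> space mu) = emeasure mu A)"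

definition fundamental_iso :: "'g measure \<Rightarrow> 'w measure \<Rightarrow> ('g \<Rightarrow> 'w \<Rightarrow> 'w) \<Rightarrow> 'w set \<Rightarrow> 'w measure \<Rightarrow> bool" where
  "fundamental_iso lam mu act X nu \<longleftrightarrow>
     X \<in> sets mu
   \<and> space nu = X \<and> sets nu = sets (restrict_space mu X)
   \<and> emeasure nu X < \<infinity>
   \<and> bij_betw (\<lambda>(g, x). act g x) (UNIV \<times> X) (space mu)
   \<and> (\<lambda>(g, x). act g x) \<in> measurable (lam \<Otimes>\<^sub>M nu) mu
   \<and> the_inv_into (UNIV \<times> X) (\<lambda>(g, x). act g x) \<in> measurable mu (lam \<Otimes>\<^sub>M nu)
   \<and> distr (lam \<Otimes>\<^sub>M nu) mu (\<lambda>(g, x). act g x) = mu"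

definition me_coupling ::
  "'g::group_add measure \<Rightarrow> 'h::group_add measure \<Rightarrow> 'w measure \<Rightarrow>
   ('g \<Rightarrow> 'w \<Rightarrow> 'w) \<Rightarrow> ('h \<Rightarrow> 'w \<Rightarrow> 'w) \<Rightarrow> 'w set \<Rightarrow> 'w measure \<Rightarrow> 'w set \<Rightarrow> 'w measure \<Rightarrow> bool" where
  "me_coupling lamG lamH mu actG actH XG nuG XH nuH \<longleftrightarrow>
     mp_action lamG mu actG \<and> mp_action lamH mu actH
   \<and> (\<forall>g h. \<forall>w\<in>space mu. actG g (actH h w) = actH h (actG g w))
   \<and> fundamental_iso lamG mu actG XG nuG
   \<and> fundamental_iso lamH mu actH XH nuH"

definition ind_act :: "('g \<Rightarrow> 'w \<Rightarrow> 'w) \<Rightarrow> ('h \<Rightarrow> 'w \<Rightarrow> 'w) \<Rightarrow> 'w set \<Rightarrow> 'g \<Rightarrow> 'w \<Rightarrow> 'w" where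
  "ind_act actG actH XH g x = (THE y. y \<in> XH \<and> (\<exists>h. y = actH h (actG g x)))"

definition cocycle :: "('g \<Rightarrow> 'w \<Rightarrow> 'w) \<Rightarrow> ('h \<Rightarrow> 'w \<Rightarrow> 'w) \<Rightarrow> 'w set \<Rightarrow> 'g \<Rightarrow> 'w \<Rightarrow> 'h" where
  "cocycle actG actH XH g x = (THE h. actH h (actG g x) \<in> XH)"

definition return_set :: "('g \<Rightarrow> 'w \<Rightarrow> 'w) \<Rightarrow> ('h \<Rightarrow> 'w \<Rightarrow> 'w) \<Rightarrow> 'w set \<Rightarrow> 'w set \<Rightarrow> 'w \<Rightarrow> 'g set" where
  "return_set actG actH XH Y x = {g. ind_act actG actH XH g x \<in> Y}"

definition mp_map_on :: "'a measure \<Rightarrow> 'b measure \<Rightarrow> ('a \<Rightarrow> 'b) \<Rightarrow> 'a set \<Rightarrow> bool" where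
  "mp_map_on lam1 lam2 phi R \<longleftrightarrow>
     R \<in> sets lam1 \<and> phi ` R \<in> sets lam2
   \<and> phi \<in> measurable (restrict_space lam1 R) lam2
   \<and> (\<forall>E\<in>sets lam2. E \<subseteq> phi ` R \<longrightarrow> emeasure lam1 {g\<in>R. phi g \<in> E} = emeasure lam2 E)"

definition property_P1 :: "'w measure \<Rightarrow> 'w set \<Rightarrow> 'w measure \<Rightarrow> 'w set \<Rightarrow> 'w measure \<Rightarrow> bool" where
  "property_P1 mu XG nuG XH nuH \<longleftrightarrow>
     (\<exists>C::real. C > 0 \<and>
        (\<forall>A\<in>sets mu. A \<subseteq> XG \<inter> XH \<longrightarrow> emeasure nuG A = ennreal C * emeasure nuH A))
   \<and> emeasure nuG (XG \<inter> XH) > 0"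

definition property_P3 ::
  "'g measure \<Rightarrow> 'h measure \<Rightarrow> ('g \<Rightarrow> 'w \<Rightarrow> 'w) \<Rightarrow> ('h \<Rightarrow> 'w \<Rightarrow> 'w) \<Rightarrow> 'w set \<Rightarrow> 'w measure \<Rightarrow> 'w set \<Rightarrow> 'w measure \<Rightarrow> bool" where
  "property_P3 lamG lamH actG actH XG nuG XH nuH \<longleftrightarrow>
     (AE x in nuH. mp_map_on lamG lamH (\<lambda>g. cocycle actG actH XH g x)
                     (return_set actG actH XH (XG \<inter> XH) x))
   \<and> (AE x in nuG. mp_map_on lamH lamG (\<lambda>h. cocycle actH actG XG h x)
                     (return_set actH actG XG (XG \<inter> XH) x))"

definition tilde_fun :: "('h::group_add \<Rightarrow> real) \<Rightarrow> ('h \<Rightarrow> 'w \<Rightarrow> 'w) \<Rightarrow> 'w set \<Rightarrow> 'w \<Rightarrow> real" where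
  "tilde_fun f actH XH w = f (- (THE h. \<exists>y\<in>XH. w = actH h y))"

definition fiber_fun :: "('h::group_add \<Rightarrow> real) \<Rightarrow> ('g \<Rightarrow> 'w \<Rightarrow> 'w) \<Rightarrow> ('h \<Rightarrow> 'w \<Rightarrow> 'w) \<Rightarrow> 'w set \<Rightarrow> 'w \<Rightarrow> 'g \<Rightarrow> real" where
  "fiber_fun f actG actH XH x g = tilde_fun f actH XH (actG g x)"

end

theory Submission
  imports Defs
begin

text \<open>Pushing \<open>\<lambda>\<^sub>G \<otimes> \<nu>\<^sub>G\<close> forward along \<open>(g, x) \<mapsto> g * x\<close> gives \<open>\<mu>\<close>, so the left-hand side
  is \<open>\<integral>\<^sub>\<Omega> |\<tilde>f|\<^sup>p d\<mu>\<close>. Decomposing \<open>\<Omega>\<close> along \<open>X\<^sub>H\<close> instead, \<open>\<tilde>f(h * y) = f(h\<^sup>-\<^sup>1)\<close> does not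
  depend on \<open>y \<in> X\<^sub>H\<close>, so the same integral equals \<open>\<nu>\<^sub>H(X\<^sub>H) \<integral>\<^sub>H |f(h\<^sup>-\<^sup>1)|\<^sup>p dh\<close>, and
  inversion invariance of unimodular Haar measure turns this into \<open>\<nu>\<^sub>H(X\<^sub>H) \<parallel>f\<parallel>\<^sub>p\<^sup>p\<close>.
  Hence \<open>K' = \<nu>\<^sub>H(X\<^sub>H)\<close> works, even with equality: (P1) only ensures \<open>\<nu>\<^sub>H(X\<^sub>H) > 0\<close>. Local compactness and second countability only make Haar measure
  \<open>\<sigma>\<close>-finite.\<close>

lemma locally_compact_ex_open_finite_nbhd:
  fixes lam :: "'a::t2_space measure"
  assumes "locally_compact_space (euclidean :: 'a topology)"
    and "sets lam = sets borel" and "\<And>K. compact K \<Longrightarrow> emeasure lam K < \<infinity>"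
  obtains U where "open U" "x \<in> U" "emeasure lam U < \<infinity>"
proof -
  have "\<exists>U K. open U \<and> compact K \<and> x \<in> U \<and> U \<subseteq> K"
    using assms(1) unfolding locally_compact_space_def by auto
  then obtain U K where UK: "open U" "compact K" "x \<in> U" "U \<subseteq> K"
    by blast
  have "K \<in> sets lam"
    using assms(2) borel_closed[OF compact_imp_closed[OF \<open>compact K\<close>]] by simp
  with UK(4) have "emeasure lam U \<le> emeasure lam K"
    by (rule emeasure_mono)
  with assms(3)[OF \<open>compact K\<close>] UK show ?thesis
    using that by (meson le_less_trans)
qed

lemma sigma_finite_measure_if_finite_on_compacts:
  fixes lam :: "'a::{t2_space, second_countable_topology} measure"
  assumes "locally_compact_space (euclidean :: 'a topology)"
    and "sets lam = sets borel" and "\<And>K. compact K \<Longrightarrow> emeasure lam K < \<infinity>"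
  shows "sigma_finite_measure lam"
proof
  define F where "F = {U::'a set. open U \<and> emeasure lam U < \<infinity>}"
  have "\<Union>F = UNIV"
  proof (intro set_eqI iffI)
    fix x :: 'a
    obtain U where "open U" "x \<in> U" "emeasure lam U < \<infinity>"
      by (rule locally_compact_ex_open_finite_nbhd[OF assms])
    then show "x \<in> \<Union>F" unfolding F_def by blast
  qed simp
  moreover obtain F' where F': "F' \<subseteq> F" "countable F'" "\<Union>F' = \<Union>F"
    by (rule Lindelof[of F]) (simp add: F_def)
  ultimately have F'_UNIV: "\<Union>F' = UNIV" by simp
  show "\<exists>A. countable A \<and> A \<subseteq> sets lam \<and> \<Union>A = space lam \<and> (\<forall>a\<in>A. emeasure lam a \<noteq> \<infinity>)"
  proof (intro exI conjI)
    show "F' \<subseteq> sets lam" "\<forall>a\<in>F'. emeasure lam a \<noteq> \<infinity>"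
      using F'(1) assms(2) unfolding F_def by auto
    show "\<Union>F' = space lam"
      using F'_UNIV sets_eq_imp_space_eq[OF assms(2)] by simp
  qed (fact F'(2))
qed

lemma haar_measureD:
  assumes "haar_measure lam"
  shows "sets lam = sets borel"
    and "A \<in> sets borel \<Longrightarrow> emeasure lam ((\<lambda>x. g + x) ` A) = emeasure lam A"
    and "compact K \<Longrightarrow> emeasure lam K < \<infinity>"
    and "open U \<Longrightarrow> U \<noteq> {} \<Longrightarrow> 0 < emeasure lam U"
  using assms unfolding haar_measure_def by auto

lemma haar_measure_sigma_finite:
  fixes lam :: "'g::{topological_group_add, t2_space, second_countable_topology} measure"
  assumes "locally_compact_space (euclidean :: 'g topology)" and "haar_measure lam"
  shows "sigma_finite_measure lam"
proof (rule sigma_finite_measure_if_finite_on_compacts[OF assms(1)])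
  show "sets lam = sets borel" "\<And>K. compact K \<Longrightarrow> emeasure lam K < \<infinity>"
    using haar_measureD[OF assms(2)] by blast+
qed

lemma haar_measure_ex_pos_finite:
  fixes lam :: "'g::{topological_group_add, t2_space} measure"
  assumes "locally_compact_space (euclidean :: 'g topology)" and "haar_measure lam"
  obtains B where "B \<in> sets borel" "0 < emeasure lam B" "emeasure lam B < \<infinity>"
proof -
  obtain U :: "'g set" where "open U" "0 \<in> U" "emeasure lam U < \<infinity>"
    by (rule locally_compact_ex_open_finite_nbhd[OF assms(1) haar_measureD(1,3)[OF assms(2)]])
  moreover have "U \<in> sets borel"
    using \<open>open U\<close> by simp
  ultimately show ?thesis
    using that[of U] haar_measureD(4)[OF assms(2), of U] by blast
qed

lemma distr_eq_selfI:
  assumes "sets M = sets borel" and "continuous_on UNIV T"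
    and "\<And>x. T (S x) = x" and "\<And>x. S (T x) = x"
    and "\<And>A. A \<in> sets borel \<Longrightarrow> emeasure M (S ` A) = emeasure M A"
  shows "distr M M T = M"
proof (rule measure_eqI)
  have T: "T \<in> measurable M M"
    using borel_measurable_continuous_onI[OF assms(2)] by (simp add: measurable_cong_sets[OF assms(1,1)])
  fix A assume "A \<in> sets (distr M M T)"
  then have A: "A \<in> sets M" by simp
  have "T -` A \<inter> space M = S ` A"
  proof (intro set_eqI iffI)
    fix x assume "x \<in> T -` A \<inter> space M"
    then show "x \<in> S ` A" using assms(4) by (metis IntD1 image_eqI vimageE)
  qed (use sets_eq_imp_space_eq[OF assms(1)] assms(3) in auto)
  then show "emeasure (distr M M T) A = emeasure M A"
    using A T assms(1,5) by (simp add: emeasure_distr)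
qed simp

lemma nn_integral_distr_eq_self:
  assumes "distr M M T = M" and "T \<in> measurable M M" and "h \<in> borel_measurable M"
  shows "(\<integral>\<^sup>+x. h (T x) \<partial>M) = (\<integral>\<^sup>+x. h x \<partial>M)"
  using nn_integral_distr[OF assms(2), of h] assms(1,3) by simp

lemma haar_nn_integral_add_left:
  fixes lam :: "'g::{topological_group_add, second_countable_topology} measure"
  assumes "haar_measure lam" and "h \<in> borel_measurable borel"
  shows "(\<integral>\<^sup>+x. h (a + x) \<partial>lam) = (\<integral>\<^sup>+x. h x \<partial>lam)"
proof (rule nn_integral_distr_eq_self)
  note sets = haar_measureD(1)[OF assms(1)]
  show "distr lam lam (\<lambda>x. a + x) = lam"
    using haar_measureD(2)[OF assms(1)]
    by (intro distr_eq_selfI[where S = "\<lambda>x. - a + x"] continuous_intros sets) auto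
  show "(\<lambda>x. a + x) \<in> measurable lam lam"
    by (simp add: measurable_cong_sets[OF sets sets])
  show "h \<in> borel_measurable lam"
    using assms(2) by (simp add: measurable_cong_sets[OF sets refl])
qed

lemma unimodular_nn_integral_add_right:
  fixes lam :: "'g::{topological_group_add, second_countable_topology} measure"
  assumes "unimodular_haar lam" and "h \<in> borel_measurable borel"
  shows "(\<integral>\<^sup>+x. h (x + a) \<partial>lam) = (\<integral>\<^sup>+x. h x \<partial>lam)"
proof (rule nn_integral_distr_eq_self)
  have sets: "sets lam = sets borel"
    using assms(1) unimodular_haar_def haar_measureD(1) by blast
  show "distr lam lam (\<lambda>x. x + a) = lam"
    using assms(1) unfolding unimodular_haar_def
    by (intro distr_eq_selfI[where S = "\<lambda>x. x + - a"] continuous_intros sets)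
      (auto simp: add.assoc simp del: diff_conv_add_uminus add_uminus_conv_diff)
  show "(\<lambda>x. x + a) \<in> measurable lam lam"
    by (simp add: measurable_cong_sets[OF sets sets])
  show "h \<in> borel_measurable lam"
    using assms(2) by (simp add: measurable_cong_sets[OF sets refl])
qed

lemma borel_measurable_group_uminus[measurable (raw)]:
  fixes f :: "'a \<Rightarrow> 'g::{topological_group_add, second_countable_topology}"
  assumes "f \<in> borel_measurable M"
  shows "(\<lambda>x. - f x) \<in> borel_measurable M"
  by (rule borel_measurable_continuous_on[OF _ assms]) (intro continuous_intros)

lemma borel_measurable_group_diff[measurable (raw)]:
  fixes f g :: "'a \<Rightarrow> 'g::{topological_group_add, second_countable_topology}"
  assumes "f \<in> borel_measurable M" and "g \<in> borel_measurable M"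
  shows "(\<lambda>x. f x - g x) \<in> borel_measurable M"
  using borel_measurable_add[OF assms(1) borel_measurable_group_uminus[OF assms(2)]] by simp

text \<open>Weil's argument: integrate \<open>\<phi>(y + x) g(y)\<close> in both orders, using left invariance
  in \<open>x\<close> and right invariance in \<open>y\<close>.\<close>

lemma unimodular_nn_integral_mult_uminus:
  fixes lam :: "'g::{topological_group_add, second_countable_topology} measure"
  assumes U: "unimodular_haar lam" and "sigma_finite_measure lam"
    and [measurable]: "\<phi> \<in> borel_measurable borel" "g \<in> borel_measurable borel"
  shows "(\<integral>\<^sup>+x. \<phi> x \<partial>lam) * (\<integral>\<^sup>+x. g x \<partial>lam) = (\<integral>\<^sup>+x. \<phi> x \<partial>lam) * (\<integral>\<^sup>+x. g (- x) \<partial>lam)"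
proof -
  have H: "haar_measure lam" using U by (simp add: unimodular_haar_def)
  note sets[measurable_cong] = haar_measureD(1)[OF H]
  interpret pair_sigma_finite lam lam
    using assms(2) by (simp add: pair_sigma_finite_def)
  have "(\<integral>\<^sup>+x. \<phi> x \<partial>lam) * (\<integral>\<^sup>+y. g y \<partial>lam) = (\<integral>\<^sup>+y. (\<integral>\<^sup>+x. \<phi> x \<partial>lam) * g y \<partial>lam)"
    by (rule nn_integral_cmult[symmetric]) measurable
  also have "\<dots> = (\<integral>\<^sup>+y. (\<integral>\<^sup>+x. \<phi> (y + x) * g y \<partial>lam) \<partial>lam)"
  proof (rule nn_integral_cong)
    fix y
    have "(\<integral>\<^sup>+x. \<phi> (y + x) * g y \<partial>lam) = (\<integral>\<^sup>+x. \<phi> (y + x) \<partial>lam) * g y"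
      by (rule nn_integral_multc) measurable
    then show "(\<integral>\<^sup>+x. \<phi> x \<partial>lam) * g y = (\<integral>\<^sup>+x. \<phi> (y + x) * g y \<partial>lam)"
      by (simp add: haar_nn_integral_add_left[OF H])
  qed
  also have "\<dots> = (\<integral>\<^sup>+x. (\<integral>\<^sup>+y. \<phi> (y + x) * g y \<partial>lam) \<partial>lam)"
    by (rule Fubini') measurable
  also have "\<dots> = (\<integral>\<^sup>+x. (\<integral>\<^sup>+y. \<phi> y * g (y - x) \<partial>lam) \<partial>lam)"
  proof (rule nn_integral_cong)
    fix x
    have "(\<integral>\<^sup>+y. \<phi> (y + x) * g (y + x - x) \<partial>lam) = (\<integral>\<^sup>+y. \<phi> y * g (y - x) \<partial>lam)"
      by (rule unimodular_nn_integral_add_right[OF U]) measurable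
    then show "(\<integral>\<^sup>+y. \<phi> (y + x) * g y \<partial>lam) = (\<integral>\<^sup>+y. \<phi> y * g (y - x) \<partial>lam)"
      by simp
  qed
  also have "\<dots> = (\<integral>\<^sup>+y. (\<integral>\<^sup>+x. \<phi> y * g (y - x) \<partial>lam) \<partial>lam)"
    by (rule Fubini'[symmetric]) measurable
  also have "\<dots> = (\<integral>\<^sup>+y. \<phi> y * (\<integral>\<^sup>+x. g (- x) \<partial>lam) \<partial>lam)"
  proof (rule nn_integral_cong)
    fix y
    have "(\<integral>\<^sup>+x. g (y - x) \<partial>lam) = (\<integral>\<^sup>+x. g (y - (x + y)) \<partial>lam)"
      by (rule unimodular_nn_integral_add_right[OF U, symmetric]) measurable
    also have "\<dots> = (\<integral>\<^sup>+x. g (- x) \<partial>lam)"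
      by (metis add_minus_cancel diff_conv_add_uminus minus_add)
    finally show "(\<integral>\<^sup>+x. \<phi> y * g (y - x) \<partial>lam) = \<phi> y * (\<integral>\<^sup>+x. g (- x) \<partial>lam)"
      by (subst nn_integral_cmult) measurable
  qed
  also have "\<dots> = (\<integral>\<^sup>+x. \<phi> x \<partial>lam) * (\<integral>\<^sup>+x. g (- x) \<partial>lam)"
    by (rule nn_integral_multc) measurable
  finally show ?thesis .
qed

lemma unimodular_nn_integral_uminus:
  fixes lam :: "'g::{topological_group_add, t2_space, second_countable_topology} measure"
  assumes "locally_compact_space (euclidean :: 'g topology)" and U: "unimodular_haar lam"
    and g: "g \<in> borel_measurable borel"
  shows "(\<integral>\<^sup>+x. g (- x) \<partial>lam) = (\<integral>\<^sup>+x. g x \<partial>lam)"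
proof -
  have H: "haar_measure lam" using U by (simp add: unimodular_haar_def)
  obtain B where B: "B \<in> sets borel" "0 < emeasure lam B" "emeasure lam B < \<infinity>"
    using haar_measure_ex_pos_finite[OF assms(1) H] .
  have "emeasure lam B * (\<integral>\<^sup>+x. g x \<partial>lam) = emeasure lam B * (\<integral>\<^sup>+x. g (- x) \<partial>lam)"
    using unimodular_nn_integral_mult_uminus[OF U haar_measure_sigma_finite[OF assms(1) H] _ g,
        of "indicator B"] B(1) haar_measureD(1)[OF H]
    by simp
  with B(2,3) show ?thesis
    by (auto simp: ennreal_mult_cancel_left)
qed

lemma tilde_fun_act:
  assumes "inj_on (\<lambda>(h, x). actH h x) (UNIV \<times> XH)" and "y \<in> XH"
  shows "tilde_fun f actH XH (actH h y) = f (- h)"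
proof -
  have "(THE h'. \<exists>y'\<in>XH. actH h y = actH h' y') = h"
  proof (rule the_equality)
    show "\<exists>y'\<in>XH. actH h y = actH h y'" using assms(2) by blast
  next
    fix h' assume "\<exists>y'\<in>XH. actH h y = actH h' y'"
    then obtain y' where "y' \<in> XH" "actH h y = actH h' y'" by blast
    with assms show "h' = h"
      using inj_onD[OF assms(1), of "(h', y')" "(h, y)"] by auto
  qed
  then show ?thesis by (simp add: tilde_fun_def)
qed

lemma tilde_fun_borel_measurable:
  fixes f :: "'h::{topological_group_add, second_countable_topology} \<Rightarrow> real"
  assumes iso: "fundamental_iso lamH mu actH XH nuH" and sets: "sets lamH = sets borel"
    and f: "f \<in> borel_measurable borel"
  shows "tilde_fun f actH XH \<in> borel_measurable mu"
proof -
  let ?P = "\<lambda>(h, x). actH h x"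
  let ?Q = "the_inv_into (UNIV \<times> XH) ?P"
  have bij: "bij_betw ?P (UNIV \<times> XH) (space mu)"
    and Q: "?Q \<in> measurable mu (lamH \<Otimes>\<^sub>M nuH)"
    using iso unfolding fundamental_iso_def by auto
  have tilde_Q: "tilde_fun f actH XH w = f (- fst (?Q w))" if "w \<in> space mu" for w
  proof -
    have "?Q w \<in> UNIV \<times> XH"
      using bij_betwE[OF bij_betw_the_inv_into[OF bij]] that by blast
    moreover have "actH (fst (?Q w)) (snd (?Q w)) = w"
      using f_the_inv_into_f_bij_betw[OF bij that] by (simp add: case_prod_beta)
    ultimately show ?thesis
      using tilde_fun_act[OF bij_betw_imp_inj_on[OF bij], of "snd (?Q w)" f "fst (?Q w)"] by auto
  qed
  have "(\<lambda>w. fst (?Q w)) \<in> borel_measurable mu"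
    using measurable_compose[OF Q measurable_fst] by (simp add: measurable_cong_sets[OF refl sets])
  then have "(\<lambda>w. f (- fst (?Q w))) \<in> borel_measurable mu"
    using f by measurable
  then show ?thesis
    by (rule measurable_cong[THEN iffD1, rotated]) (simp add: tilde_Q)
qed

lemma fundamental_iso_nn_integral:
  assumes iso: "fundamental_iso lam mu act X nu" and "sigma_finite_measure lam"
    and T: "T \<in> borel_measurable mu"
  shows "integral\<^sup>N mu T = (\<integral>\<^sup>+x. (\<integral>\<^sup>+g. T (act g x) \<partial>lam) \<partial>nu)"
proof -
  let ?P = "\<lambda>(g, x). act g x"
  have P: "?P \<in> measurable (lam \<Otimes>\<^sub>M nu) mu" and D: "distr (lam \<Otimes>\<^sub>M nu) mu ?P = mu"
    and "space nu = X" "emeasure nu X < \<infinity>"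
    using iso unfolding fundamental_iso_def by auto
  then interpret nu: finite_measure nu by (intro finite_measureI) simp
  interpret pair_sigma_finite lam nu
    using assms(2) nu.sigma_finite_measure_axioms by (simp add: pair_sigma_finite_def)
  have "integral\<^sup>N mu T = integral\<^sup>N (distr (lam \<Otimes>\<^sub>M nu) mu ?P) T"
    by (simp add: D)
  also have "\<dots> = integral\<^sup>N (lam \<Otimes>\<^sub>M nu) (T \<circ> ?P)"
    using nn_integral_distr[OF P, of T] T by (simp add: comp_def)
  also have "\<dots> = (\<integral>\<^sup>+x. (\<integral>\<^sup>+g. (T \<circ> ?P) (g, x) \<partial>lam) \<partial>nu)"
    by (rule nn_integral_snd[symmetric]) (rule measurable_comp[OF P T])
  finally show ?thesis by simp
qed

lemma fiber_fun_nn_integral: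
  fixes lamH :: "'h::{topological_group_add, second_countable_topology} measure"
  assumes isoG: "fundamental_iso lamG mu actG XG nuG"
    and isoH: "fundamental_iso lamH mu actH XH nuH"
    and sfG: "sigma_finite_measure lamG" and sfH: "sigma_finite_measure lamH"
    and sets: "sets lamH = sets borel"
    and f: "f \<in> borel_measurable borel" and \<phi>: "\<phi> \<in> borel_measurable borel"
  shows "(\<integral>\<^sup>+x. (\<integral>\<^sup>+g. \<phi> (fiber_fun f actG actH XH x g) \<partial>lamG) \<partial>nuG)
       = emeasure nuH XH * (\<integral>\<^sup>+h. \<phi> (f (- h)) \<partial>lamH)"
proof -
  have T: "(\<lambda>w. \<phi> (tilde_fun f actH XH w)) \<in> borel_measurable mu"
    using measurable_compose[OF tilde_fun_borel_measurable[OF isoH sets f] \<phi>] .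
  have inj: "inj_on (\<lambda>(h, x). actH h x) (UNIV \<times> XH)" and space: "space nuH = XH"
    using isoH unfolding fundamental_iso_def by (auto dest: bij_betw_imp_inj_on)
  have "(\<integral>\<^sup>+x. (\<integral>\<^sup>+g. \<phi> (fiber_fun f actG actH XH x g) \<partial>lamG) \<partial>nuG)
      = (\<integral>\<^sup>+w. \<phi> (tilde_fun f actH XH w) \<partial>mu)"
    unfolding fiber_fun_def by (rule fundamental_iso_nn_integral[OF isoG sfG T, symmetric])
  also have "\<dots> = (\<integral>\<^sup>+x. (\<integral>\<^sup>+h. \<phi> (tilde_fun f actH XH (actH h x)) \<partial>lamH) \<partial>nuH)"
    by (rule fundamental_iso_nn_integral[OF isoH sfH T])
  also have "\<dots> = (\<integral>\<^sup>+x. (\<integral>\<^sup>+h. \<phi> (f (- h)) \<partial>lamH) \<partial>nuH)"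
    by (intro nn_integral_cong) (simp add: tilde_fun_act[OF inj] space)
  also have "\<dots> = emeasure nuH XH * (\<integral>\<^sup>+h. \<phi> (f (- h)) \<partial>lamH)"
    by (simp add: space mult.commute)
  finally show ?thesis .
qed

lemma property_P1_emeasure_pos:
  assumes "property_P1 mu XG nuG XH nuH"
    and "fundamental_iso lamG mu actG XG nuG" and "fundamental_iso lamH mu actH XH nuH"
  shows "0 < emeasure nuH XH"
proof -
  obtain C :: real where "\<And>A. A \<in> sets mu \<Longrightarrow> A \<subseteq> XG \<inter> XH \<Longrightarrow> emeasure nuG A = ennreal C * emeasure nuH A"
    and pos: "0 < emeasure nuG (XG \<inter> XH)"
    using assms(1) unfolding property_P1_def by blast
  moreover have "XG \<inter> XH \<in> sets mu" and space: "space nuH = XH"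
    using assms(2,3) unfolding fundamental_iso_def by auto
  ultimately have "emeasure nuH (XG \<inter> XH) \<noteq> 0"
    by (metis mult_zero_right order_refl pos less_irrefl)
  moreover have "emeasure nuH (XG \<inter> XH) \<le> emeasure nuH XH"
    using sets.top[of nuH] space by (intro emeasure_mono) auto
  ultimately show ?thesis
    by (metis gr_zeroI le_zero_eq)
qed

theorem mainTheorem10:
  fixes lamG :: "'g::{topological_group_add, t2_space, second_countable_topology} measure"
    and lamH :: "'h::{topological_group_add, t2_space, second_countable_topology} measure"
    and mu :: "'w measure"
    and actG :: "'g \<Rightarrow> 'w \<Rightarrow> 'w" and actH :: "'h \<Rightarrow> 'w \<Rightarrow> 'w"
    and XG XH :: "'w set" and nuG nuH :: "'w measure"
  assumes "lcsc_cg_nondiscrete TYPE('g)" and "lcsc_cg_nondiscrete TYPE('h)"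
    and "unimodular_haar lamG" and "unimodular_haar lamH"
    and "me_coupling lamG lamH mu actG actH XG nuG XH nuH"
    and "property_P1 mu XG nuG XH nuH"
    and "property_P3 lamG lamH actG actH XG nuG XH nuH"
  shows "\<exists>K'::real. K' > 0 \<and>
    (\<forall>(p::real) (f::'h \<Rightarrow> real). p \<ge> 1 \<longrightarrow> f \<in> borel_measurable lamH
       \<longrightarrow> (\<integral>\<^sup>+ h. ennreal (\<bar>f h\<bar> powr p) \<partial>lamH) < \<infinity>
       \<longrightarrow> emeasure lamH {h. f h \<noteq> 0} < \<infinity>
       \<longrightarrow> (\<integral>\<^sup>+ x. (\<integral>\<^sup>+ g. ennreal (\<bar>fiber_fun f actG actH XH x g\<bar> powr p) \<partial>lamG) \<partial>nuG)
           \<ge> ennreal K' * (\<integral>\<^sup>+ h. ennreal (\<bar>f h\<bar> powr p) \<partial>lamH))"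
proof -
  have iso: "fundamental_iso lamG mu actG XG nuG" "fundamental_iso lamH mu actH XH nuH"
    using assms(5) unfolding me_coupling_def by auto
  have lc: "locally_compact_space (euclidean :: 'g topology)"
    "locally_compact_space (euclidean :: 'h topology)"
    using assms(1,2) unfolding lcsc_cg_nondiscrete_def by auto
  have haar: "haar_measure lamG" "haar_measure lamH"
    using assms(3,4) unfolding unimodular_haar_def by auto
  note setsH = haar_measureD(1)[OF haar(2)]
  have "0 < emeasure nuH XH" and "emeasure nuH XH < \<infinity>"
    using property_P1_emeasure_pos[OF assms(6) iso] iso(2) unfolding fundamental_iso_def by auto
  then have K: "0 < enn2real (emeasure nuH XH)" "ennreal (enn2real (emeasure nuH XH)) = emeasure nuH XH"
    by (auto simp: enn2real_positive_iff)
  show ?thesis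
  proof (intro exI conjI allI impI)
    fix p :: real and f :: "'h \<Rightarrow> real"
    assume "f \<in> borel_measurable lamH"
    then have f[measurable]: "f \<in> borel_measurable borel"
      by (simp add: measurable_cong_sets[OF setsH refl])
    have "(\<integral>\<^sup>+x. (\<integral>\<^sup>+g. ennreal (\<bar>fiber_fun f actG actH XH x g\<bar> powr p) \<partial>lamG) \<partial>nuG)
        = emeasure nuH XH * (\<integral>\<^sup>+h. ennreal (\<bar>f (- h)\<bar> powr p) \<partial>lamH)"
      by (rule fiber_fun_nn_integral[OF iso haar_measure_sigma_finite[OF lc(1) haar(1)]
            haar_measure_sigma_finite[OF lc(2) haar(2)] setsH f]) measurable
    also have "\<dots> = emeasure nuH XH * (\<integral>\<^sup>+h. ennreal (\<bar>f h\<bar> powr p) \<partial>lamH)"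
      by (subst unimodular_nn_integral_uminus[OF lc(2) assms(4)]) measurable
    finally show "(\<integral>\<^sup>+x. (\<integral>\<^sup>+g. ennreal (\<bar>fiber_fun f actG actH XH x g\<bar> powr p) \<partial>lamG) \<partial>nuG)
        \<ge> ennreal (enn2real (emeasure nuH XH)) * (\<integral>\<^sup>+h. ennreal (\<bar>f h\<bar> powr p) \<partial>lamH)"
      by (simp add: K(2))
  qed (fact K(1))
qed

end
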